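(* For every integer $r\geq 3$ there exist an $r$-connected $r$-regular graph $G$ of even order and a set $\mathcal O$ of pairwise vertex-disjoint odd cycles of $G$ with the following property: if $t$ is a positive integer and $F$ is a $t$-factor of $G$ with $E(F) \cap E(O) \neq \emptyset$ for every $O \in \mathcal{O}$, then $t \geq \frac{r}{3}$.
   Context: Graphs are finite and loopless. A cycle is a connected $2$-regular subgraph; it is odd if it has an odd number of edges. A $t$-factor of $G$ is a spanning $t$-regular subgraph. $r$-connected means $G$ has more than $r$ vertices and remains connected after deleting any fewer than $r$ vertices. *)

theory Defs
  imports Complex_Main
begin

text \<open>Finite loopless (multi)graphs: vertex set V, edge set E, and an endpoint map
  assigning to each edge a 2-element set of vertices (parallel edges allowed).\<close>

definition loopless_graph :: "'a set \<Rightarrow> 'e set \<Rightarrow> ('e \<Rightarrow> 'a set) \<Rightarrow> bool" where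
  "loopless_graph V E ends \<longleftrightarrow> finite V \<and> finite E \<and>
     (\<forall>e\<in>E. ends e \<subseteq> V \<and> card (ends e) = 2)"

definition degree_in :: "'e set \<Rightarrow> ('e \<Rightarrow> 'a set) \<Rightarrow> 'a \<Rightarrow> nat" where
  "degree_in E ends v = card {e\<in>E. v \<in> ends e}"

definition regular_on :: "'a set \<Rightarrow> 'e set \<Rightarrow> ('e \<Rightarrow> 'a set) \<Rightarrow> nat \<Rightarrow> bool" where
  "regular_on V E ends k \<longleftrightarrow> (\<forall>v\<in>V. degree_in E ends v = k)"

definition adj_in :: "'a set \<Rightarrow> 'e set \<Rightarrow> ('e \<Rightarrow> 'a set) \<Rightarrow> 'a \<Rightarrow> 'a \<Rightarrow> bool" where
  "adj_in W E ends x y \<longleftrightarrow> (\<exists>e\<in>E. ends e \<subseteq> W \<and> x \<in> ends e \<and> y \<in> ends e)"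

definition connected_on :: "'a set \<Rightarrow> 'e set \<Rightarrow> ('e \<Rightarrow> 'a set) \<Rightarrow> bool" where
  "connected_on W E ends \<longleftrightarrow> W \<noteq> {} \<and> (\<forall>u\<in>W. \<forall>w\<in>W. (adj_in W E ends)\<^sup>*\<^sup>* u w)"

definition r_connected :: "'a set \<Rightarrow> 'e set \<Rightarrow> ('e \<Rightarrow> 'a set) \<Rightarrow> nat \<Rightarrow> bool" where
  "r_connected V E ends r \<longleftrightarrow> card V > r \<and>
     (\<forall>S. S \<subseteq> V \<and> card S < r \<longrightarrow> connected_on (V - S) E ends)"

definition is_subgraph :: "'a set \<Rightarrow> 'e set \<Rightarrow> ('e \<Rightarrow> 'a set) \<Rightarrow> 'a set \<Rightarrow> 'e set \<Rightarrow> bool" where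
  "is_subgraph V E ends V' E' \<longleftrightarrow> V' \<subseteq> V \<and> E' \<subseteq> E \<and> (\<forall>e\<in>E'. ends e \<subseteq> V')"

definition is_cycle :: "'a set \<Rightarrow> 'e set \<Rightarrow> ('e \<Rightarrow> 'a set) \<Rightarrow> 'a set \<Rightarrow> 'e set \<Rightarrow> bool" where
  "is_cycle V E ends V' E' \<longleftrightarrow> is_subgraph V E ends V' E' \<and> connected_on V' E' ends
     \<and> regular_on V' E' ends 2"

definition is_factor :: "'a set \<Rightarrow> 'e set \<Rightarrow> ('e \<Rightarrow> 'a set) \<Rightarrow> nat \<Rightarrow> 'e set \<Rightarrow> bool" where
  "is_factor V E ends t F \<longleftrightarrow> is_subgraph V E ends V F \<and> regular_on V F ends t"

end

theory Submission
  imports Defs "HOL-Library.Nat_Bijection"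
begin

text \<open>Take r vertex-disjoint triangles, colour the three corners of each triangle 0, 1, 2, and
  for each colour c add r - 2 further vertices joined to all r triangle corners of colour c.
  The result is r-regular on 6r - 6 vertices, and the 3r - 6 added vertices are independent.
  A t-factor therefore has t(3r - 3) edges, of which t(3r - 6) meet the added vertices, so only
  3t of its edges lie inside the triangles; if it meets each of the r triangles, r \<le> 3t.
  Deleting fewer than r vertices leaves some triangle intact, and every surviving vertex still
  reaches that triangle: an added vertex directly, a corner through an added vertex of its own
  colour or, failing that, through a surviving triangle mate.\<close>

text \<open>An edge is the natural number coding the sorted pair of its endpoints, so that a
  simple graph on nat is given by a symmetric adjacency relation.\<close>

definition pair_code :: "nat \<Rightarrow> nat \<Rightarrow> nat" where
  "pair_code u w = prod_encode (min u w, max u w)"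

definition pair_ends :: "nat \<Rightarrow> nat set" where
  "pair_ends e = {fst (prod_decode e), snd (prod_decode e)}"

definition pair_edges :: "(nat \<Rightarrow> nat \<Rightarrow> bool) \<Rightarrow> nat set" where
  "pair_edges adj = {pair_code u w | u w. adj u w}"

lemma pair_ends_pair_code [simp]: "pair_ends (pair_code u w) = {u, w}"
  unfolding pair_ends_def pair_code_def by (auto simp: min_def max_def)

lemma pair_code_eq_iff: "pair_code u w = pair_code x y \<longleftrightarrow> (u = x \<and> w = y) \<or> (u = y \<and> w = x)"
  unfolding pair_code_def by (auto simp: prod_encode_eq min_def max_def split: if_splits)

lemma pair_code_commute: "pair_code u w = pair_code w u"
  by (auto simp: pair_code_eq_iff)

lemma incident_pair_edges:
  assumes "symp adj"
  shows "{e \<in> pair_edges adj. v \<in> pair_ends e} = pair_code v ` {w. adj v w}"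
proof
  show "{e \<in> pair_edges adj. v \<in> pair_ends e} \<subseteq> pair_code v ` {w. adj v w}"
  proof clarify
    fix e assume "e \<in> pair_edges adj" "v \<in> pair_ends e"
    then obtain u w where "e = pair_code u w" "adj u w" "v = u \<or> v = w"
      unfolding pair_edges_def by auto
    then show "e \<in> pair_code v ` {w. adj v w}"
      using sympD[OF assms] pair_code_commute by blast
  qed
  show "pair_code v ` {w. adj v w} \<subseteq> {e \<in> pair_edges adj. v \<in> pair_ends e}"
    unfolding pair_edges_def by auto
qed

lemma degree_in_pair_edges:
  assumes "symp adj"
  shows "degree_in (pair_edges adj) pair_ends v = card {w. adj v w}"
proof -
  have "inj_on (pair_code v) {w. adj v w}"
    by (auto simp: inj_on_def pair_code_eq_iff)
  then show ?thesis
    unfolding degree_in_def incident_pair_edges[OF assms] by (simp add: card_image)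
qed

lemma pair_code_in_pair_edges: "adj u w \<Longrightarrow> pair_code u w \<in> pair_edges adj"
  unfolding pair_edges_def by blast

lemma adj_in_pair_edgesI:
  "adj x y \<Longrightarrow> x \<in> W \<Longrightarrow> y \<in> W \<Longrightarrow> adj_in W (pair_edges adj) pair_ends x y"
  unfolding adj_in_def pair_edges_def by force

lemma loopless_graph_pair_edges:
  assumes "finite V" and "\<And>u w. adj u w \<Longrightarrow> u \<noteq> w \<and> u \<in> V \<and> w \<in> V"
  shows "loopless_graph V (pair_edges adj) pair_ends"
proof -
  have "pair_edges adj \<subseteq> (\<lambda>(u, w). pair_code u w) ` (V \<times> V)"
    using assms(2) unfolding pair_edges_def by auto
  then have "finite (pair_edges adj)"
    using assms(1) by (auto intro: finite_subset)
  then show ?thesis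
    using assms unfolding loopless_graph_def pair_edges_def by auto
qed

lemma is_cycle_triangle:
  assumes "distinct [a, b, c]" and "{a, b, c} \<subseteq> V"
    and "{pair_code a b, pair_code a c, pair_code b c} \<subseteq> E"
  shows "is_cycle V E pair_ends {a, b, c} {pair_code a b, pair_code a c, pair_code b c}"
    (is "is_cycle V E pair_ends ?W ?T")
proof -
  have "is_subgraph V E pair_ends ?W ?T"
    using assms unfolding is_subgraph_def by auto
  moreover have "connected_on ?W ?T pair_ends"
    unfolding connected_on_def adj_in_def by auto
  moreover have "regular_on ?W ?T pair_ends 2"
  proof -
    have "{e \<in> ?T. a \<in> pair_ends e} = {pair_code a b, pair_code a c}"
      "{e \<in> ?T. b \<in> pair_ends e} = {pair_code a b, pair_code b c}"
      "{e \<in> ?T. c \<in> pair_ends e} = {pair_code a c, pair_code b c}"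
      using assms(1) by auto
    then show ?thesis
      using assms(1) unfolding regular_on_def degree_in_def by (auto simp: pair_code_eq_iff)
  qed
  ultimately show ?thesis
    unfolding is_cycle_def by blast
qed

lemma rtranclp_adj_in_sym:
  "(adj_in W E ends)\<^sup>*\<^sup>* x y \<Longrightarrow> (adj_in W E ends)\<^sup>*\<^sup>* y x"
  by (rule sympD[OF symp_rtranclp]) (auto simp: symp_def adj_in_def)

lemma connected_onI_hub:
  assumes "W \<noteq> {}" and "\<And>w. w \<in> W \<Longrightarrow> (adj_in W E ends)\<^sup>*\<^sup>* w h"
  shows "connected_on W E ends"
  using assms rtranclp_adj_in_sym unfolding connected_on_def by (meson rtranclp_trans)

lemma sum_degree_in:
  assumes "finite F" and "finite A"
  shows "(\<Sum>v\<in>A. degree_in F ends v) = (\<Sum>e\<in>F. card (ends e \<inter> A))"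
proof -
  have "(\<Sum>v\<in>A. degree_in F ends v) = (\<Sum>v\<in>A. \<Sum>e\<in>F. if v \<in> ends e then 1 else 0)"
    using assms by (simp add: degree_in_def sum.If_cases Int_def)
  also have "\<dots> = (\<Sum>e\<in>F. \<Sum>v\<in>A. if v \<in> ends e then 1 else 0)"
    by (rule sum.swap)
  also have "\<dots> = (\<Sum>e\<in>F. card (ends e \<inter> A))"
    using assms by (simp add: sum.If_cases Int_def conj_commute)
  finally show ?thesis .
qed

text \<open>The degree sum over V counts every edge of F twice, the degree sum over X counts each
  edge of F meeting X once.\<close>

lemma card_factor_edges_avoiding:
  assumes G: "loopless_graph V E ends" and F: "is_factor V E ends t F" and "X \<subseteq> V"
    and X: "\<And>e. e \<in> F \<Longrightarrow> card (ends e \<inter> X) \<le> 1"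
  shows "2 * card {e \<in> F. ends e \<inter> X = {}} + 2 * (t * card X) = t * card V"
proof -
  have FE: "F \<subseteq> E" and deg: "\<And>v. v \<in> V \<Longrightarrow> degree_in F ends v = t"
    using F unfolding is_factor_def is_subgraph_def regular_on_def by auto
  have edge_ends: "\<And>e. e \<in> F \<Longrightarrow> ends e \<subseteq> V \<and> card (ends e) = 2"
    using G FE unfolding loopless_graph_def by auto
  have fin: "finite F" "finite V" "finite X"
    using G FE \<open>X \<subseteq> V\<close> unfolding loopless_graph_def by (auto intro: finite_subset)
  define F0 where "F0 = {e \<in> F. ends e \<inter> X = {}}"
  define F1 where "F1 = {e \<in> F. ends e \<inter> X \<noteq> {}}"
  have "t * card V = (\<Sum>v\<in>V. degree_in F ends v)"
    using deg by simp
  also have "\<dots> = (\<Sum>e\<in>F. card (ends e \<inter> V))"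
    using sum_degree_in[OF fin(1,2)] .
  also have "\<dots> = 2 * card F"
    using edge_ends by (simp add: Int_absorb2)
  finally have total: "t * card V = 2 * card F" .
  have "t * card X = (\<Sum>v\<in>X. degree_in F ends v)"
    using deg \<open>X \<subseteq> V\<close> by (simp add: subset_iff)
  also have "\<dots> = (\<Sum>e\<in>F. card (ends e \<inter> X))"
    using sum_degree_in[OF fin(1,3)] .
  also have "\<dots> = (\<Sum>e\<in>F. if ends e \<inter> X \<noteq> {} then 1 else 0)"
  proof (rule sum.cong)
    fix e assume "e \<in> F"
    then have "finite (ends e \<inter> X)"
      using edge_ends fin(2) by (meson finite_Int finite_subset)
    then show "card (ends e \<inter> X) = (if ends e \<inter> X \<noteq> {} then 1 else 0)"
      using X[OF \<open>e \<in> F\<close>] by (auto simp: le_Suc_eq card_le_Suc0_iff_eq)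
  qed simp
  also have "\<dots> = card F1"
    using fin(1) by (simp add: F1_def sum.If_cases Int_def)
  finally have meeting: "t * card X = card F1" .
  have "card F = card F0 + card F1"
    using fin(1) unfolding F0_def F1_def
    by (subst card_Un_disjoint[symmetric]) (auto intro: arg_cong[where f = card])
  then show ?thesis
    using total meeting unfolding F0_def by simp
qed

lemma card_residue_class:
  assumes "c < 3"
  shows "card {v \<in> {3*a..<3*b}. v mod 3 = c} = b - a"
proof -
  have "{v \<in> {3*a..<3*b}. v mod 3 = c} = (\<lambda>k. 3*k + c) ` {a..<b}"
  proof (intro set_eqI iffI)
    fix v assume "v \<in> {v \<in> {3*a..<3*b}. v mod 3 = c}"
    then have "v = 3 * (v div 3) + c" "v div 3 \<in> {a..<b}"
      by (auto simp: less_mult_imp_div_less div_le_mono[of "3*a" v 3, simplified])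
    then show "v \<in> (\<lambda>k. 3*k + c) ` {a..<b}" by blast
  qed (use assms in auto)
  then show ?thesis
    by (simp add: card_image inj_on_def)
qed

text \<open>Vertices below 3r are the corners of the triangles, vertex v lying in triangle v div 3
  with colour v mod 3; the vertices of outer r are the added ones, again coloured mod 3.\<close>

definition triangle :: "nat \<Rightarrow> nat set" where
  "triangle i = {3*i, 3*i+1, 3*i+2}"

definition triangle_edges :: "nat \<Rightarrow> nat set" where
  "triangle_edges i = {pair_code (3*i) (3*i+1), pair_code (3*i) (3*i+2), pair_code (3*i+1) (3*i+2)}"

definition outer :: "nat \<Rightarrow> nat set" where
  "outer r = {3*r..<6*r-6}"

definition outer_class :: "nat \<Rightarrow> nat \<Rightarrow> nat set" where
  "outer_class r c = {v \<in> outer r. v mod 3 = c}"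

definition inner_class :: "nat \<Rightarrow> nat \<Rightarrow> nat set" where
  "inner_class r c = {v \<in> {..<3*r}. v mod 3 = c}"

definition tri_adj :: "nat \<Rightarrow> nat \<Rightarrow> nat \<Rightarrow> bool" where
  "tri_adj r u w \<longleftrightarrow> u \<noteq> w \<and>
     ((u < 3*r \<and> w < 3*r \<and> u div 3 = w div 3) \<or>
      (u < 3*r \<and> w \<in> outer r \<and> u mod 3 = w mod 3) \<or>
      (u \<in> outer r \<and> w < 3*r \<and> u mod 3 = w mod 3))"

lemma mem_triangle_iff: "w \<in> triangle i \<longleftrightarrow> w div 3 = i"
proof
  assume "w div 3 = i"
  then have "w = 3*i + w mod 3"
    using div_mult_mod_eq[of w 3] by linarith
  moreover have "w mod 3 = 0 \<or> w mod 3 = 1 \<or> w mod 3 = 2"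
    by linarith
  ultimately show "w \<in> triangle i"
    unfolding triangle_def by (metis insertCI add_0_right)
qed (auto simp: triangle_def)

lemma card_triangle: "card (triangle i) = 3"
  by (simp add: triangle_def)

lemma triangle_disjoint: "i \<noteq> k \<Longrightarrow> triangle i \<inter> triangle k = {}"
  by (auto simp: mem_triangle_iff)

lemma div3_less_iff: "w div 3 < r \<longleftrightarrow> w < 3*(r::nat)"
  by (simp add: div_less_iff_less_mult mult.commute)

lemma same_triangle_inner: "w div 3 = v div 3 \<Longrightarrow> v < 3*r \<Longrightarrow> w < 3*(r::nat)"
  by (metis div3_less_iff)

lemma card_outer: "card (outer r) = 3*r - 6"
  by (simp add: outer_def)

lemma card_outer_class: "c < 3 \<Longrightarrow> card (outer_class r c) = r - 2"
  using card_residue_class[of c r "2*r-2"]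
  by (simp add: outer_class_def outer_def right_diff_distrib')

lemma card_inner_class: "c < 3 \<Longrightarrow> card (inner_class r c) = r"
  using card_residue_class[of c 0 r] by (simp add: inner_class_def atLeast0LessThan)

lemma finite_outer_class: "finite (outer_class r c)"
  by (simp add: outer_class_def outer_def)

lemma symp_tri_adj: "symp (tri_adj r)"
  by (auto simp: symp_def tri_adj_def)

lemma tri_adj_same_triangle:
  "u \<noteq> w \<Longrightarrow> u < 3*r \<Longrightarrow> w < 3*r \<Longrightarrow> u div 3 = w div 3 \<Longrightarrow> tri_adj r u w"
  by (simp add: tri_adj_def)

lemma tri_adj_inner_outer:
  "u < 3*r \<Longrightarrow> w \<in> outer r \<Longrightarrow> u mod 3 = w mod 3 \<Longrightarrow> tri_adj r u w"
  by (auto simp: tri_adj_def outer_def)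

lemma tri_adj_vertices:
  "r \<ge> 3 \<Longrightarrow> tri_adj r u w \<Longrightarrow> u \<noteq> w \<and> u \<in> {..<6*r-6} \<and> w \<in> {..<6*r-6}"
  by (auto simp: tri_adj_def outer_def)

lemma neighbours_inner:
  assumes "r \<ge> 3" and "v < 3*r"
  shows "{w. tri_adj r v w} = (triangle (v div 3) - {v}) \<union> outer_class r (v mod 3)"
  using assms by (auto simp: tri_adj_def outer_class_def outer_def mem_triangle_iff
      div3_less_iff[symmetric] not_less[symmetric])

lemma neighbours_outer:
  assumes "r \<ge> 3" and "v \<in> outer r"
  shows "{w. tri_adj r v w} = inner_class r (v mod 3)"
  using assms by (auto simp: tri_adj_def inner_class_def outer_def)

lemma regular_tri_graph:
  assumes "r \<ge> 3"
  shows "regular_on {..<6*r-6} (pair_edges (tri_adj r)) pair_ends r"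
  unfolding regular_on_def degree_in_pair_edges[OF symp_tri_adj]
proof
  fix v assume "v \<in> {..<6*r-6}"
  show "card {w. tri_adj r v w} = r"
  proof (cases "v < 3*r")
    case True
    have "card (triangle (v div 3) - {v}) = 2"
      by (simp add: card_Diff_singleton_if card_triangle mem_triangle_iff)
    moreover have "(triangle (v div 3) - {v}) \<inter> outer_class r (v mod 3) = {}"
      using same_triangle_inner[OF _ True]
      by (fastforce simp: mem_triangle_iff outer_class_def outer_def)
    ultimately show ?thesis
      using assms True
      by (simp add: neighbours_inner card_Un_disjoint finite_outer_class card_outer_class triangle_def)
  next
    case False
    then have "v \<in> outer r"
      using \<open>v \<in> {..<6*r-6}\<close> by (simp add: outer_def)
    then show ?thesis
      using assms by (simp add: neighbours_outer card_inner_class)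
  qed
qed

lemma triangle_avoiding:
  assumes "finite S" and "card S < r"
  obtains i where "i < r" and "triangle i \<inter> S = {}"
proof -
  have "\<not> (\<forall>i<r. triangle i \<inter> S \<noteq> {})"
  proof
    assume hit: "\<forall>i<r. triangle i \<inter> S \<noteq> {}"
    have "{..<r} \<subseteq> (\<lambda>v. v div 3) ` S"
    proof
      fix i assume "i \<in> {..<r}"
      then obtain v where "v \<in> S" "v div 3 = i"
        using hit unfolding mem_triangle_iff[symmetric] by blast
      then show "i \<in> (\<lambda>v. v div 3) ` S"
        by blast
    qed
    then have "card {..<r} \<le> card ((\<lambda>v. v div 3) ` S)"
      using assms(1) by (intro card_mono) simp_all
    also have "\<dots> \<le> card S"
      using assms(1) by (rule card_image_le)
    finally have "r \<le> card S"
      by simp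
    with assms(2) show False
      by simp
  qed
  then show thesis
    using that by blast
qed

text \<open>If all three corners of the triangle of v were blocked (deleted, or with their whole
  colour class of added vertices deleted), S would contain the class of v and one vertex of
  each of the two other colours: r vertices.\<close>

lemma triangle_corner_escape:
  assumes "r \<ge> 3" and "finite S" and "card S < r" and "v < 3*r" and "v \<notin> S"
  obtains a where "a < 3" and "3 * (v div 3) + a \<notin> S" and "\<not> outer_class r a \<subseteq> S"
proof -
  have "\<exists>a<3. 3 * (v div 3) + a \<notin> S \<and> \<not> outer_class r a \<subseteq> S"
  proof (rule ccontr)
    assume "\<not> ?thesis"
    then have blocked: "3 * (v div 3) + a \<in> S \<or> outer_class r a \<subseteq> S" if "a < 3" for a
      using that by blast
    define c where "c = v mod 3"
    define f where "f b = (if 3 * (v div 3) + b \<in> S then 3 * (v div 3) + b else 3*r + b)" for b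
    have f_mod: "f b mod 3 = b" if "b < 3" for b
      using that by (simp add: f_def)
    have "outer_class r c \<union> f ` ({..<3} - {c}) \<subseteq> S"
    proof -
      have "outer_class r c \<subseteq> S"
        using blocked[of c] \<open>v \<notin> S\<close> by (simp add: c_def)
      moreover have "f b \<in> S" if "b < 3" for b
      proof -
        have "3*r + b \<in> outer_class r b"
          using assms(1) that by (auto simp: outer_class_def outer_def)
        then show ?thesis
          using blocked[OF that] unfolding f_def by auto
      qed
      ultimately show ?thesis
        by auto
    qed
    moreover have "card (outer_class r c \<union> f ` ({..<3} - {c})) = (r - 2) + 2"
    proof -
      have "inj_on f ({..<3} - {c})"
        using f_mod by (metis Diff_iff inj_onI lessThan_iff)
      moreover have "outer_class r c \<inter> f ` ({..<3} - {c}) = {}"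
        using f_mod by (auto simp: outer_class_def)
      ultimately show ?thesis
        by (simp add: card_Un_disjoint finite_outer_class card_outer_class card_image c_def)
    qed
    ultimately have "(r - 2) + 2 \<le> card S"
      using assms(2) by (metis card_mono)
    then show False
      using assms(1,3) by linarith
  qed
  then show thesis
    using that by blast
qed

definition reach_avoiding :: "nat \<Rightarrow> nat set \<Rightarrow> nat \<Rightarrow> nat \<Rightarrow> bool" where
  "reach_avoiding r S = (adj_in ({..<6*r-6} - S) (pair_edges (tri_adj r)) pair_ends)\<^sup>*\<^sup>*"

lemma reach_avoiding_step:
  assumes "r \<ge> 3" and "tri_adj r x y" and "x \<notin> S" and "y \<notin> S"
  shows "reach_avoiding r S x y"
proof -
  have "x \<in> {..<6*r-6} - S" "y \<in> {..<6*r-6} - S"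
    using tri_adj_vertices[OF assms(1,2)] assms(3,4) by simp_all
  then show ?thesis
    unfolding reach_avoiding_def by (intro r_into_rtranclp adj_in_pair_edgesI[of "tri_adj r"] assms(2))
qed

lemma reach_avoiding_trans:
  "reach_avoiding r S x y \<Longrightarrow> reach_avoiding r S y z \<Longrightarrow> reach_avoiding r S x z"
  unfolding reach_avoiding_def by (rule rtranclp_trans)

lemma triangle_reach_corner:
  assumes "r \<ge> 3" and "i < r" and "triangle i \<inter> S = {}" and "u div 3 = i"
  shows "reach_avoiding r S u (3*i)"
proof (cases "u = 3*i")
  case False
  have "u \<in> triangle i" "3*i \<in> triangle i"
    using assms(4) mem_triangle_iff by (blast, simp add: triangle_def)
  with assms(3) have "u \<notin> S" "3*i \<notin> S"
    by blast+
  moreover have "u < 3*r" "3*i < 3*r"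
    using assms(2,4) by (simp_all add: div3_less_iff[symmetric])
  ultimately show ?thesis
    using False assms(4) by (simp add: reach_avoiding_step[OF assms(1)] tri_adj_same_triangle)
qed (simp add: reach_avoiding_def)

lemma outer_reach_triangle:
  assumes "r \<ge> 3" and "i < r" and "triangle i \<inter> S = {}" and "x \<in> outer r" and "x \<notin> S"
  shows "reach_avoiding r S x (3*i)"
proof -
  define u where "u = 3*i + x mod 3"
  have "u div 3 = i" "u < 3*r"
    using assms(2) by (auto simp: u_def)
  then have "u \<notin> S"
    using assms(3) mem_triangle_iff by blast
  have "tri_adj r u x"
    using tri_adj_inner_outer[OF \<open>u < 3*r\<close> assms(4)] by (simp add: u_def)
  then have "tri_adj r x u"
    using symp_tri_adj by (rule sympD[rotated])
  then have "reach_avoiding r S x u"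
    using assms(1,5) \<open>u \<notin> S\<close> by (intro reach_avoiding_step)
  then show ?thesis
    using triangle_reach_corner[OF assms(1-3) \<open>u div 3 = i\<close>] by (rule reach_avoiding_trans)
qed

lemma corner_reach_triangle:
  assumes "r \<ge> 3" and "finite S" and "card S < r" and "i < r" and "triangle i \<inter> S = {}"
    and "v < 3*r" and "v \<notin> S"
  shows "reach_avoiding r S v (3*i)"
proof -
  obtain a x where "a < 3" and mate: "3 * (v div 3) + a \<notin> S"
    and "x \<in> outer_class r a" and "x \<notin> S"
    using triangle_corner_escape[OF assms(1-3,6,7)] by blast
  define u where "u = 3 * (v div 3) + a"
  have "u \<notin> S"
    using mate by (simp add: u_def)
  have "u div 3 = v div 3"
    using \<open>a < 3\<close> by (simp add: u_def)
  have "u < 3*r"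
    using same_triangle_inner[OF \<open>u div 3 = v div 3\<close> \<open>v < 3*r\<close>] .
  have "x \<in> outer r" "u mod 3 = x mod 3"
    using \<open>x \<in> outer_class r a\<close> \<open>a < 3\<close> by (simp_all add: outer_class_def u_def)
  have vu: "reach_avoiding r S v u"
  proof (cases "v = u")
    case False
    with \<open>u div 3 = v div 3\<close> \<open>u < 3*r\<close> \<open>v < 3*r\<close> have "tri_adj r v u"
      by (simp add: tri_adj_same_triangle)
    then show ?thesis
      using assms(1,7) \<open>u \<notin> S\<close> by (intro reach_avoiding_step)
  qed (simp add: reach_avoiding_def)
  have "tri_adj r u x"
    using \<open>u < 3*r\<close> \<open>x \<in> outer r\<close> \<open>u mod 3 = x mod 3\<close> by (rule tri_adj_inner_outer)
  then have ux: "reach_avoiding r S u x"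
    using assms(1) \<open>u \<notin> S\<close> \<open>x \<notin> S\<close> by (intro reach_avoiding_step)
  show ?thesis
    using outer_reach_triangle[OF assms(1,4,5) \<open>x \<in> outer r\<close> \<open>x \<notin> S\<close>]
    by (rule reach_avoiding_trans[OF reach_avoiding_trans[OF vu ux]])
qed

lemma connected_tri_graph:
  assumes "r \<ge> 3" and "S \<subseteq> {..<6*r-6}" and "card S < r"
  shows "connected_on ({..<6*r-6} - S) (pair_edges (tri_adj r)) pair_ends"
proof -
  have "finite S"
    using assms(2) finite_subset by blast
  obtain i where "i < r" and "triangle i \<inter> S = {}"
    using triangle_avoiding[OF \<open>finite S\<close> assms(3)] .
  have "reach_avoiding r S w (3*i)" if "w \<in> {..<6*r-6} - S" for w
  proof (cases "w < 3*r")
    case True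
    with that show ?thesis
      using corner_reach_triangle[OF assms(1) \<open>finite S\<close> assms(3) \<open>i < r\<close> \<open>triangle i \<inter> S = {}\<close>]
      by blast
  next
    case False
    with that have "w \<in> outer r" "w \<notin> S"
      by (simp_all add: outer_def)
    then show ?thesis
      by (rule outer_reach_triangle[OF assms(1) \<open>i < r\<close> \<open>triangle i \<inter> S = {}\<close>])
  qed
  moreover have "card ({..<6*r-6} - S) > 0"
    using assms \<open>finite S\<close> by (simp add: card_Diff_subset)
  then have "{..<6*r-6} - S \<noteq> {}"
    using card_gt_0_iff by blast
  ultimately show ?thesis
    unfolding reach_avoiding_def by (intro connected_onI_hub)
qed

lemma loopless_tri_graph:
  "r \<ge> 3 \<Longrightarrow> loopless_graph {..<6*r-6} (pair_edges (tri_adj r)) pair_ends"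
  by (rule loopless_graph_pair_edges) (simp, meson tri_adj_vertices)

lemma triangle_is_cycle:
  assumes "r \<ge> 3" and "i < r"
  shows "is_cycle {..<6*r-6} (pair_edges (tri_adj r)) pair_ends (triangle i) (triangle_edges i)"
  unfolding triangle_def triangle_edges_def
proof (rule is_cycle_triangle)
  have "3*i + 2 < 3*r"
    using assms(2) by simp
  then show "{3*i, 3*i+1, 3*i+2} \<subseteq> {..<6*r-6}"
    using assms(1) by auto
  have "(3*i) div 3 = i" "(3*i+1) div 3 = i" "(3*i+2) div 3 = i"
    by (simp_all add: mem_triangle_iff[symmetric] triangle_def)
  then show "{pair_code (3*i) (3*i+1), pair_code (3*i) (3*i+2), pair_code (3*i+1) (3*i+2)}
      \<subseteq> pair_edges (tri_adj r)"
    using \<open>3*i + 2 < 3*r\<close>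
    by (simp del: div_mult_self1_is_m add: pair_code_in_pair_edges tri_adj_same_triangle)
qed simp

lemma card_triangle_edges: "card (triangle_edges i) = 3"
  by (simp add: triangle_edges_def pair_code_eq_iff)

lemma pair_ends_triangle_edges: "e \<in> triangle_edges i \<Longrightarrow> pair_ends e \<subseteq> triangle i"
  by (auto simp: triangle_edges_def triangle_def)

lemma triangle_edges_disjoint:
  assumes "i \<noteq> k"
  shows "triangle_edges i \<inter> triangle_edges k = {}"
proof -
  have "pair_ends e \<subseteq> triangle i \<inter> triangle k" if "e \<in> triangle_edges i" "e \<in> triangle_edges k" for e
    using that pair_ends_triangle_edges by blast
  moreover have "pair_ends e \<noteq> {}" for e
    by (simp add: pair_ends_def)
  ultimately show ?thesis
    using triangle_disjoint[OF assms] by blast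
qed

lemma triangle_outer_disjoint: "i < r \<Longrightarrow> triangle i \<inter> outer r = {}"
  by (auto simp: mem_triangle_iff outer_def div3_less_iff[symmetric])

lemma card_pair_ends_outer:
  assumes "e \<in> pair_edges (tri_adj r)"
  shows "card (pair_ends e \<inter> outer r) \<le> 1"
proof -
  obtain u w where "e = pair_code u w" and "tri_adj r u w"
    using assms unfolding pair_edges_def by blast
  moreover have "\<not> (u \<in> outer r \<and> w \<in> outer r)"
    using \<open>tri_adj r u w\<close> by (auto simp: tri_adj_def outer_def)
  ultimately have "pair_ends e \<inter> outer r \<subseteq> {u} \<or> pair_ends e \<inter> outer r \<subseteq> {w}"
    by auto
  then show ?thesis
    using card_mono[of "{u}"] card_mono[of "{w}"] by force
qed

lemma factor_meeting_triangles:
  assumes "r \<ge> 3" and F: "is_factor {..<6*r-6} (pair_edges (tri_adj r)) pair_ends t F"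
    and meets: "\<forall>i<r. F \<inter> triangle_edges i \<noteq> {}"
  shows "r \<le> 3 * t"
proof -
  have FE: "F \<subseteq> pair_edges (tri_adj r)"
    using F unfolding is_factor_def is_subgraph_def by blast
  have "finite F"
    using loopless_tri_graph[OF assms(1)] FE unfolding loopless_graph_def by (blast intro: finite_subset)
  define F0 where "F0 = {e \<in> F. pair_ends e \<inter> outer r = {}}"
  have count: "2 * card F0 + 2 * (t * card (outer r)) = t * card {..<6*r-6}"
    unfolding F0_def
  proof (rule card_factor_edges_avoiding[OF loopless_tri_graph[OF assms(1)] F])
    show "outer r \<subseteq> {..<6*r-6}"
      by (auto simp: outer_def)
  qed (use FE card_pair_ends_outer in blast)
  have "card {..<6*r-6} = 2 * card (outer r) + 6"
    using assms(1) by (simp add: card_outer)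
  then have "card F0 = 3 * t"
    using count by (simp add: algebra_simps)
  have "r = (\<Sum>i<r. 1)"
    by simp
  also have "\<dots> \<le> (\<Sum>i<r. card (F \<inter> triangle_edges i))"
    using meets \<open>finite F\<close> by (intro sum_mono) (simp add: Suc_le_eq card_gt_0_iff)
  also have "\<dots> = card (\<Union>i<r. F \<inter> triangle_edges i)"
    using \<open>finite F\<close> triangle_edges_disjoint by (intro card_UN_disjoint[symmetric]) auto
  also have "\<dots> \<le> card F0"
  proof (rule card_mono)
    show "finite F0"
      using \<open>finite F\<close> by (simp add: F0_def)
    show "(\<Union>i<r. F \<inter> triangle_edges i) \<subseteq> F0"
      using pair_ends_triangle_edges triangle_outer_disjoint unfolding F0_def by blast
  qed
  finally show ?thesis
    using \<open>card F0 = 3 * t\<close> by simp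
qed

theorem theorem3p1:
  fixes r :: nat
  assumes "r \<ge> 3"
  shows "\<exists>(V::nat set) (E::nat set) (ends::nat \<Rightarrow> nat set) (Cs::(nat set \<times> nat set) set).
    loopless_graph V E ends \<and> regular_on V E ends r \<and> r_connected V E ends r \<and> even (card V) \<and>
    (\<forall>C\<in>Cs. is_cycle V E ends (fst C) (snd C) \<and> odd (card (snd C))) \<and>
    (\<forall>C1\<in>Cs. \<forall>C2\<in>Cs. C1 \<noteq> C2 \<longrightarrow> fst C1 \<inter> fst C2 = {}) \<and>
    (\<forall>(t::nat) F. t > 0 \<longrightarrow> is_factor V E ends t F \<longrightarrow> (\<forall>C\<in>Cs. F \<inter> snd C \<noteq> {}) \<longrightarrow>
       real t \<ge> real r / 3)"
proof (intro exI conjI)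
  let ?V = "{..<6*r-6}" and ?E = "pair_edges (tri_adj r)"
  let ?Cs = "(\<lambda>i. (triangle i, triangle_edges i)) ` {..<r}"
  show "loopless_graph ?V ?E pair_ends"
    using loopless_tri_graph[OF assms] .
  show "regular_on ?V ?E pair_ends r"
    using regular_tri_graph[OF assms] .
  show "r_connected ?V ?E pair_ends r"
    unfolding r_connected_def using assms connected_tri_graph[OF assms] by simp
  show "even (card ?V)"
    by (simp add: right_diff_distrib'[of 2 "3*r" 3, simplified])
  show "\<forall>C\<in>?Cs. is_cycle ?V ?E pair_ends (fst C) (snd C) \<and> odd (card (snd C))"
    using triangle_is_cycle[OF assms] by (auto simp: card_triangle_edges)
  show "\<forall>C1\<in>?Cs. \<forall>C2\<in>?Cs. C1 \<noteq> C2 \<longrightarrow> fst C1 \<inter> fst C2 = {}"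
    by (auto simp: mem_triangle_iff)
  show "\<forall>t F. t > 0 \<longrightarrow> is_factor ?V ?E pair_ends t F \<longrightarrow> (\<forall>C\<in>?Cs. F \<inter> snd C \<noteq> {}) \<longrightarrow>
      real t \<ge> real r / 3"
    using factor_meeting_triangles[OF assms] by force
qed

end
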